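(* Let $G$ be a finite abelian group and $S\subseteq G$ nonempty, and let $SS^{-1}=\{st^{-1}:s,t\in S\}$. Then $\mathrm{sh}_G(SS^{-1})\le\frac{\#(SS^{-1})}{\#S}$.
   Context: Shape parameter: for a finite abelian group $G$ (written multiplicatively), $G^\vee=\mathrm{Hom}(G,\mathbb C^* )$ with trivial character $\chi_0$. For $f=\sum_{g\in G}c_g g\in\mathbb C[G]$ and $\chi\in G^\vee$ put $f_\chi=\sum_g c_g\chi(g^{-1})$. For $S\subseteq G$ let $\mathbb C[S]=\{\sum_{s\in S}c_ss\}\subseteq\mathbb C[G]$. The shape parameter is $\mathrm{sh}_G(S)=\frac{\#S}{\#G}\inf\left\{\frac{\sum_{\chi\in G^\vee}|f_\chi|}{|f_{\chi_0}|}: f\in\mathbb C[S],\ f_{\chi_0}\neq0\right\}$. *)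

theory Defs
  imports Complex_Main
begin

text \<open>A finite abelian group G is modelled as a finite type of class ab_group_add
  (written additively: g^{-1} becomes -g, st^{-1} becomes s - t); G = UNIV.\<close>

definition characters :: "('a::{ab_group_add,finite} \<Rightarrow> complex) set" where
  "characters = {\<chi>. (\<forall>x y. \<chi> (x + y) = \<chi> x * \<chi> y) \<and> (\<forall>x. \<chi> x \<noteq> 0)}"

text \<open>An element f of C[G] is represented by its coefficient function c; f_chi.\<close>
definition fourier_coeff :: "('a::{ab_group_add,finite} \<Rightarrow> complex) \<Rightarrow> ('a \<Rightarrow> complex) \<Rightarrow> complex" where
  "fourier_coeff c \<chi> = (\<Sum>g\<in>UNIV. c g * \<chi> (- g))"

definition shape_param :: "'a::{ab_group_add,finite} set \<Rightarrow> real" where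
  "shape_param S = (real (card S) / real (card (UNIV :: 'a set))) *
     Inf {(\<Sum>\<chi>\<in>characters. cmod (fourier_coeff c \<chi>)) / cmod (fourier_coeff c (\<lambda>_. 1)) | c.
           (\<forall>g. g \<notin> S \<longrightarrow> c g = 0) \<and> fourier_coeff c (\<lambda>_. 1) \<noteq> 0}"

definition diff_set :: "'a::ab_group_add set \<Rightarrow> 'a set" where
  "diff_set S = {s - t | s t. s \<in> S \<and> t \<in> S}"

end

theory Submission
  imports Defs "HOL-Library.Indicator_Function" "HOL-Analysis.Convex"
begin

text \<open>Take f = 1_S * 1_{S^{-1}}, supported on SS^{-1}, whose coefficient at g counts the
  representations g = st^{-1}. Then f_\<chi> = |\<Sum>_{s\<in>S} \<chi>(s)|^2 and f_{\<chi>_0} = (#S)^2, while Bessel's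
  inequality for the orthogonal characters bounds \<Sum>_\<chi> |\<Sum>_{s\<in>S} \<chi>(s)|^2 by #G #S.
  Hence the ratio in the definition of sh_G(SS^{-1}) is at most #G/#S for this f.\<close>

lemma character_add: "\<chi> \<in> characters \<Longrightarrow> \<chi> (x + y) = \<chi> x * \<chi> y"
  by (simp add: characters_def)

lemma character_nonzero: "\<chi> \<in> characters \<Longrightarrow> \<chi> x \<noteq> 0"
  by (simp add: characters_def)

lemma character_zero: "\<chi> \<in> characters \<Longrightarrow> \<chi> 0 = 1"
  using character_add[of \<chi> 0 0] character_nonzero[of \<chi> 0] by simp

lemma character_minus_mult: "\<chi> \<in> characters \<Longrightarrow> \<chi> (- x) * \<chi> x = 1"
  using character_add[of \<chi> "- x" x] character_zero[of \<chi>] by simp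

text \<open>\<chi>(s)^{#G} = 1, by comparing \<Prod>_x \<chi>(x) with \<Prod>_x \<chi>(x + s).\<close>

lemma norm_character:
  fixes \<chi> :: "'a::{ab_group_add,finite} \<Rightarrow> complex"
  assumes "\<chi> \<in> characters"
  shows "cmod (\<chi> s) = 1"
proof -
  have "(\<Prod>x\<in>UNIV. \<chi> x) = (\<Prod>x\<in>UNIV. \<chi> (x + s))"
    by (rule prod.reindex_bij_witness[of _ "\<lambda>x. x + s" "\<lambda>x. x - s"]) auto
  also have "\<dots> = (\<Prod>x\<in>UNIV. \<chi> x) * \<chi> s ^ card (UNIV :: 'a set)"
    using assms by (simp add: character_add prod.distrib)
  finally have "\<chi> s ^ card (UNIV :: 'a set) = 1"
    using character_nonzero[OF assms] by (simp add: prod_zero_iff)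
  then have "cmod (\<chi> s) ^ card (UNIV :: 'a set) = 1"
    by (metis norm_one norm_power)
  then show ?thesis
    using power_eq_iff_eq_base[of "card (UNIV :: 'a set)" "cmod (\<chi> s)" 1]
    by (simp add: card_gt_0_iff)
qed

lemma character_minus:
  fixes \<chi> :: "'a::{ab_group_add,finite} \<Rightarrow> complex"
  assumes "\<chi> \<in> characters"
  shows "\<chi> (- x) = cnj (\<chi> x)"
proof -
  have "\<chi> x * cnj (\<chi> x) = 1"
    using norm_character[OF assms, of x] by (simp flip: complex_norm_square)
  then show ?thesis
    using character_minus_mult[OF assms, of x] character_nonzero[OF assms, of x]
    by (metis mult.commute mult_cancel_right)
qed

lemma character_orthogonality:
  fixes \<chi> \<psi> :: "'a::{ab_group_add,finite} \<Rightarrow> complex"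
  assumes "\<chi> \<in> characters" and "\<psi> \<in> characters"
  shows "(\<Sum>g\<in>UNIV. \<chi> g * cnj (\<psi> g)) = (if \<chi> = \<psi> then of_nat (card (UNIV :: 'a set)) else 0)"
proof (cases "\<chi> = \<psi>")
  case True
  then show ?thesis
    using norm_character[OF assms(1)] by (simp flip: complex_norm_square)
next
  case False
  define \<phi> where "\<phi> g = \<chi> g * cnj (\<psi> g)" for g
  obtain a where "\<chi> a \<noteq> \<psi> a"
    using False by blast
  then have "\<phi> a \<noteq> 1"
    using character_minus_mult[OF assms(2), of a]
    by (auto simp: \<phi>_def character_minus[OF assms(2), symmetric])
       (metis mult.assoc mult.commute mult_1)
  have "(\<Sum>g\<in>UNIV. \<phi> g) = (\<Sum>g\<in>UNIV. \<phi> (g + a))"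
    by (rule sum.reindex_bij_witness[of _ "\<lambda>x. x + a" "\<lambda>x. x - a"]) auto
  also have "\<dots> = \<phi> a * (\<Sum>g\<in>UNIV. \<phi> g)"
    using assms by (simp add: \<phi>_def character_add sum_distrib_left ac_simps)
  finally have "(\<Sum>g\<in>UNIV. \<phi> g) = 0"
    using \<open>\<phi> a \<noteq> 1\<close> by (metis mult_cancel_right1)
  then show ?thesis
    using False by (simp add: \<phi>_def)
qed

lemma bessel_inequality:
  fixes X :: "('b::finite \<Rightarrow> complex) set" and f :: "'b \<Rightarrow> complex"
  assumes "finite X" and "N \<ge> 0"
    and orth: "\<And>\<phi> \<psi>. \<phi> \<in> X \<Longrightarrow> \<psi> \<in> X \<Longrightarrow>
                 (\<Sum>g\<in>UNIV. \<phi> g * cnj (\<psi> g)) = (if \<phi> = \<psi> then of_real N else 0)"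
  shows "(\<Sum>\<phi>\<in>X. (cmod (\<Sum>g\<in>UNIV. f g * cnj (\<phi> g)))\<^sup>2) \<le> N * (\<Sum>g\<in>UNIV. (cmod (f g))\<^sup>2)"
proof -
  define a where "a \<phi> = (\<Sum>g\<in>UNIV. f g * cnj (\<phi> g))" for \<phi>
  define p where "p g = (\<Sum>\<phi>\<in>X. a \<phi> * \<phi> g)" for g
  define B where "B = (\<Sum>\<phi>\<in>X. (cmod (a \<phi>))\<^sup>2)"
  \<comment> \<open>p is N times the orthogonal projection of f onto the span of X; Cauchy--Schwarz
    for the pairing of f with p gives B^2 \<le> \<parallel>f\<parallel>^2 N B.\<close>
  have "B \<ge> 0"
    unfolding B_def by (simp add: sum_nonneg)
  have "(\<Sum>g\<in>UNIV. f g * cnj (p g)) = (\<Sum>\<phi>\<in>X. a \<phi> * cnj (a \<phi>))"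
    unfolding p_def a_def
    by (simp add: sum_distrib_left sum_distrib_right sum.swap[of _ X] ac_simps)
  also have "\<dots> = of_real B"
    unfolding B_def by (simp flip: complex_norm_square)
  finally have proj: "(\<Sum>g\<in>UNIV. f g * cnj (p g)) = of_real B" .
  have "(\<Sum>g\<in>UNIV. p g * cnj (p g))
      = (\<Sum>\<phi>\<in>X. \<Sum>\<psi>\<in>X. a \<phi> * cnj (a \<psi>) * (\<Sum>g\<in>UNIV. \<phi> g * cnj (\<psi> g)))"
    unfolding p_def
    by (simp add: sum_product sum_distrib_left sum.swap[of _ UNIV] ac_simps)
       (intro sum.cong refl sum.swap)
  also have "\<dots> = (\<Sum>\<phi>\<in>X. \<Sum>\<psi>\<in>X. if \<phi> = \<psi> then a \<phi> * cnj (a \<phi>) * of_real N else 0)"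
    by (intro sum.cong refl) (simp add: orth)
  also have "\<dots> = (\<Sum>\<phi>\<in>X. a \<phi> * cnj (a \<phi>) * of_real N)"
    using \<open>finite X\<close> by simp
  also have "\<dots> = of_real (N * B)"
    unfolding B_def by (simp add: sum_distrib_left ac_simps flip: complex_norm_square)
  finally have norm_p: "(\<Sum>g\<in>UNIV. (cmod (p g))\<^sup>2) = N * B"
    by (metis (no_types, lifting) complex_norm_square of_real_eq_iff of_real_sum sum.cong)
  have "B\<^sup>2 \<le> (\<Sum>g\<in>UNIV. cmod (f g) * cmod (p g))\<^sup>2"
    using \<open>B \<ge> 0\<close> norm_sum[of "\<lambda>g. f g * cnj (p g)" UNIV]
    by (intro power_mono) (simp_all add: proj norm_mult)
  also have "\<dots> \<le> (\<Sum>g\<in>UNIV. (cmod (f g))\<^sup>2) * (N * B)"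
    using Cauchy_Schwarz_ineq_sum[of "\<lambda>g. cmod (f g)" "\<lambda>g. cmod (p g)" UNIV] by (simp add: norm_p)
  finally show ?thesis
    using \<open>B \<ge> 0\<close> \<open>N \<ge> 0\<close> unfolding B_def[symmetric] a_def[symmetric]
    by (cases "B = 0") (auto simp: power2_eq_square mult_le_cancel_right sum_nonneg ac_simps)
qed

text \<open>The case split is only formal: a sum over an infinite set is 0.\<close>

lemma sum_characters_norm_sum_sq_le:
  fixes S :: "'a::{ab_group_add,finite} set"
  shows "(\<Sum>\<chi>\<in>characters. (cmod (\<Sum>s\<in>S. \<chi> s))\<^sup>2) \<le> real (card (UNIV :: 'a set)) * real (card S)"
proof (cases "finite (characters :: ('a \<Rightarrow> complex) set)")
  case True
  have "(\<Sum>\<chi>\<in>characters. (cmod (\<Sum>s\<in>S. \<chi> s))\<^sup>2)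
      = (\<Sum>\<chi>\<in>characters. (cmod (\<Sum>g\<in>UNIV. indicator S g * cnj (\<chi> g)))\<^sup>2)"
    by (simp flip: cnj_sum)
  also have "\<dots> \<le> real (card (UNIV :: 'a set)) * (\<Sum>g\<in>UNIV. (cmod (indicator S g))\<^sup>2)"
    using True by (intro bessel_inequality) (auto simp: character_orthogonality)
  also have "\<dots> = real (card (UNIV :: 'a set)) * real (card S)"
  proof -
    have "(cmod (of_bool b :: complex))\<^sup>2 = of_bool b" for b
      by (cases b) simp_all
    then show ?thesis
      by (simp add: indicator_def)
  qed
  finally show ?thesis .
qed simp

definition diff_count :: "'a::ab_group_add set \<Rightarrow> 'a \<Rightarrow> complex" where
  "diff_count S g = of_nat (card {p \<in> S \<times> S. fst p - snd p = g})"

lemma diff_count_eq_0: "g \<notin> diff_set S \<Longrightarrow> diff_count S g = 0"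
  by (auto simp: diff_count_def diff_set_def card_eq_0_iff)

lemma fourier_coeff_diff_count:
  fixes S :: "'a::{ab_group_add,finite} set" and \<chi> :: "'a \<Rightarrow> complex"
  assumes hom: "\<And>x y. \<chi> (x + y) = \<chi> x * \<chi> y"
  shows "fourier_coeff (diff_count S) \<chi> = (\<Sum>s\<in>S. \<chi> (- s)) * (\<Sum>t\<in>S. \<chi> t)"
proof -
  have "fourier_coeff (diff_count S) \<chi>
      = (\<Sum>g\<in>UNIV. \<Sum>p\<in>{p \<in> S \<times> S. fst p - snd p = g}. \<chi> (- (fst p - snd p)))"
    by (simp add: fourier_coeff_def diff_count_def)
  also have "\<dots> = (\<Sum>p\<in>S \<times> S. \<chi> (- (fst p - snd p)))"
    by (rule sum.group) auto
  also have "\<dots> = (\<Sum>s\<in>S. \<Sum>t\<in>S. \<chi> (- s) * \<chi> t)"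
    by (simp add: sum.cartesian_product case_prod_beta flip: hom)
  finally show ?thesis
    by (simp add: sum_product)
qed

lemma norm_fourier_coeff_diff_count:
  assumes "\<chi> \<in> characters"
  shows "cmod (fourier_coeff (diff_count S) \<chi>) = (cmod (\<Sum>s\<in>S. \<chi> s))\<^sup>2"
  using assms
  by (simp add: fourier_coeff_diff_count character_add character_minus norm_mult power2_eq_square
      flip: cnj_sum)

lemma shape_param_le:
  fixes S :: "'a::{ab_group_add,finite} set"
  assumes "\<And>g. g \<notin> S \<Longrightarrow> c g = 0" and "fourier_coeff c (\<lambda>_. 1) \<noteq> 0"
  shows "shape_param S \<le> real (card S) / real (card (UNIV :: 'a set)) *
    ((\<Sum>\<chi>\<in>characters. cmod (fourier_coeff c \<chi>)) / cmod (fourier_coeff c (\<lambda>_. 1)))"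
  unfolding shape_param_def using assms
  by (intro mult_left_mono cInf_lower bdd_belowI[of _ 0])
     (auto intro!: divide_nonneg_nonneg sum_nonneg)

theorem lemma3p3:
  fixes S :: "'a::{ab_group_add,finite} set"
  assumes "S \<noteq> {}"
  shows "shape_param (diff_set S) \<le> real (card (diff_set S)) / real (card S)"
proof -
  have "card S > 0"
    using assms by (simp add: card_gt_0_iff)
  have trivial_coeff: "fourier_coeff (diff_count S) (\<lambda>_. 1) = of_nat (card S * card S)"
    by (simp add: fourier_coeff_diff_count)
  have "(\<Sum>\<chi>\<in>characters. cmod (fourier_coeff (diff_count S) \<chi>))
      \<le> real (card (UNIV :: 'a set)) * real (card S)"
    by (simp add: norm_fourier_coeff_diff_count sum_characters_norm_sum_sq_le)
  then have ratio: "(\<Sum>\<chi>\<in>characters. cmod (fourier_coeff (diff_count S) \<chi>))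
      / cmod (fourier_coeff (diff_count S) (\<lambda>_. 1)) \<le> real (card (UNIV :: 'a set)) / real (card S)"
    using \<open>card S > 0\<close> by (simp add: trivial_coeff norm_mult field_simps)
  have "shape_param (diff_set S) \<le> real (card (diff_set S)) / real (card (UNIV :: 'a set)) *
      ((\<Sum>\<chi>\<in>characters. cmod (fourier_coeff (diff_count S) \<chi>))
        / cmod (fourier_coeff (diff_count S) (\<lambda>_. 1)))"
    using assms by (intro shape_param_le) (simp_all add: diff_count_eq_0 trivial_coeff)
  also have "\<dots> \<le> real (card (diff_set S)) / real (card (UNIV :: 'a set)) *
      (real (card (UNIV :: 'a set)) / real (card S))"
    by (intro mult_left_mono ratio) simp
  finally show ?thesis
    by simp
qed

end
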